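(* Suppose $\nu=\nu_1\times\nu_2\times\cdots\times\nu_d$ is a product probability measure on $\mathcal X=\{1,\dots,B\}^d$. Let $\mathfrak T_1$ and $\mathfrak T_2$ be two tree structures, and let $I_1,I_2\subset\{1,\dots,d\}$ be disjoint sets of indices such that $\mathfrak T_1$ and $\mathfrak T_2$ contain splits only on features in $I_1$ and $I_2$ respectively. Then every local decision stump of $\mathfrak T_1$ is orthogonal in $L^2(\nu)$ to every local decision stump of $\mathfrak T_2$.
   Context: A tree structure is a finite rooted binary tree whose internal nodes carry splitting rules $(v,t)$; each node corresponds to a rectangular region $\mathfrak t\subset\mathcal X$, with the root corresponding to $\mathcal X$, and an internal node $\mathfrak t$ with rule $(v,t)$ has children $\mathfrak t_L=\{\mathbf x\in\mathfrak t:x_v\le t\}$ and $\mathfrak t_R=\{\mathbf x\in\mathfrak t:x_v>t\}$ (both nonempty). A tree "splits on feature $v$" if some internal node has a rule with feature $v$. For each internal node $\mathfrak t$, the local decision stump is the function $$\psi(\mathbf x)=\frac{\nu(\mathfrak t_R)\mathbf 1\{\mathbf x\in\mathfrak t_L\}-\nu(\mathfrak t_L)\mathbf 1\{\mathbf x\in\mathfrak t_R\}}{\sqrt{\nu(\mathfrak t_L)\nu(\mathfrak t_R)}}.$$ *)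

theory Defs
  imports Complex_Main "HOL-Library.FuncSet"
begin

definition cube :: "nat \<Rightarrow> nat \<Rightarrow> (nat \<Rightarrow> nat) set" where
  "cube B d = PiE {1..d} (\<lambda>_. {1..B})"

text \<open>Product probability measure nu = nu_1 x ... x nu_d given by marginal
  probability mass functions p j on {1..B}.\<close>
definition is_marginals :: "nat \<Rightarrow> nat \<Rightarrow> (nat \<Rightarrow> nat \<Rightarrow> real) \<Rightarrow> bool" where
  "is_marginals B d p \<longleftrightarrow>
     (\<forall>j\<in>{1..d}. (\<forall>b\<in>{1..B}. p j b \<ge> 0) \<and> (\<Sum>b=1..B. p j b) = 1)"

definition pmass :: "nat \<Rightarrow> (nat \<Rightarrow> nat \<Rightarrow> real) \<Rightarrow> (nat \<Rightarrow> nat) \<Rightarrow> real" where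
  "pmass d p x = (\<Prod>j=1..d. p j (x j))"

definition nu :: "nat \<Rightarrow> nat \<Rightarrow> (nat \<Rightarrow> nat \<Rightarrow> real) \<Rightarrow> (nat \<Rightarrow> nat) set \<Rightarrow> real" where
  "nu B d p A = (\<Sum>x\<in>A \<inter> cube B d. pmass d p x)"

definition L2_inner :: "nat \<Rightarrow> nat \<Rightarrow> (nat \<Rightarrow> nat \<Rightarrow> real) \<Rightarrow>
    ((nat \<Rightarrow> nat) \<Rightarrow> real) \<Rightarrow> ((nat \<Rightarrow> nat) \<Rightarrow> real) \<Rightarrow> real" where
  "L2_inner B d p f g = (\<Sum>x\<in>cube B d. pmass d p x * f x * g x)"

datatype tree = Leaf | Node nat real tree tree

definition left_region :: "(nat \<Rightarrow> nat) set \<Rightarrow> nat \<Rightarrow> real \<Rightarrow> (nat \<Rightarrow> nat) set" where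
  "left_region R v t = {x\<in>R. real (x v) \<le> t}"

definition right_region :: "(nat \<Rightarrow> nat) set \<Rightarrow> nat \<Rightarrow> real \<Rightarrow> (nat \<Rightarrow> nat) set" where
  "right_region R v t = {x\<in>R. real (x v) > t}"

fun valid_tree :: "nat \<Rightarrow> (nat \<Rightarrow> nat) set \<Rightarrow> tree \<Rightarrow> bool" where
  "valid_tree d R Leaf = True"
| "valid_tree d R (Node v t l r) \<longleftrightarrow>
     v \<in> {1..d} \<and> left_region R v t \<noteq> {} \<and> right_region R v t \<noteq> {} \<and>
     valid_tree d (left_region R v t) l \<and> valid_tree d (right_region R v t) r"

definition is_tree_structure :: "nat \<Rightarrow> nat \<Rightarrow> tree \<Rightarrow> bool" where
  "is_tree_structure B d T \<longleftrightarrow> valid_tree d (cube B d) T"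

fun internal_nodes :: "(nat \<Rightarrow> nat) set \<Rightarrow> tree \<Rightarrow> ((nat \<Rightarrow> nat) set \<times> nat \<times> real) set" where
  "internal_nodes R Leaf = {}"
| "internal_nodes R (Node v t l r) =
     insert (R, v, t) (internal_nodes (left_region R v t) l \<union> internal_nodes (right_region R v t) r)"

fun split_features :: "tree \<Rightarrow> nat set" where
  "split_features Leaf = {}"
| "split_features (Node v t l r) = insert v (split_features l \<union> split_features r)"

definition stump :: "nat \<Rightarrow> nat \<Rightarrow> (nat \<Rightarrow> nat \<Rightarrow> real) \<Rightarrow> (nat \<Rightarrow> nat) set \<Rightarrow> nat \<Rightarrow> real
    \<Rightarrow> (nat \<Rightarrow> nat) \<Rightarrow> real" where
  "stump B d p R v t x =
     (nu B d p (right_region R v t) * (if x \<in> left_region R v t then 1 else 0)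
      - nu B d p (left_region R v t) * (if x \<in> right_region R v t then 1 else 0))
     / sqrt (nu B d p (left_region R v t) * nu B d p (right_region R v t))"

definition local_stumps :: "nat \<Rightarrow> nat \<Rightarrow> (nat \<Rightarrow> nat \<Rightarrow> real) \<Rightarrow> tree
    \<Rightarrow> ((nat \<Rightarrow> nat) \<Rightarrow> real) set" where
  "local_stumps B d p T = (\<lambda>(R, v, t). stump B d p R v t) ` internal_nodes (cube B d) T"

end

theory Submission
  imports Defs "HOL-Analysis.Finite_Product_Measure"
begin

text \<open>A region of a tree that splits only on features in \<open>I\<close> is a cylinder set over
  the coordinates in \<open>I\<close>, so every local stump of such a tree is a function of the
  \<open>I\<close>-coordinates alone. Under a product measure, functions of disjoint sets of
  coordinates are independent, so the inner product of two stumps factors into the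
  product of their means, and a local stump has mean zero.\<close>

definition depends_only_on :: "('i \<Rightarrow> 'a) set \<Rightarrow> 'i set \<Rightarrow> (('i \<Rightarrow> 'a) \<Rightarrow> 'b) \<Rightarrow> bool" where
  "depends_only_on C I f \<longleftrightarrow> (\<forall>x\<in>C. \<forall>y\<in>C. (\<forall>i\<in>I. x i = y i) \<longrightarrow> f x = f y)"

lemma depends_only_on_mono:
  "depends_only_on C I f \<Longrightarrow> I \<subseteq> I' \<Longrightarrow> depends_only_on C I' f"
  unfolding depends_only_on_def by blast

lemma depends_only_onD:
  "depends_only_on C I f \<Longrightarrow> x \<in> C \<Longrightarrow> y \<in> C \<Longrightarrow> (\<And>i. i \<in> I \<Longrightarrow> x i = y i) \<Longrightarrow> f x = f y"
  unfolding depends_only_on_def by blast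

lemma bij_betw_merge_PiE:
  assumes "I \<inter> J = {}"
  shows "bij_betw (merge I J) (PiE I A \<times> PiE J A) (PiE (I \<union> J) A)"
proof (rule bij_betwI[where g="\<lambda>x. (restrict x I, restrict x J)"])
  show "merge I J \<in> PiE I A \<times> PiE J A \<rightarrow> PiE (I \<union> J) A"
    using assms by (auto simp: PiE_iff)
  show "(\<lambda>x. (restrict x I, restrict x J)) \<in> PiE (I \<union> J) A \<rightarrow> PiE I A \<times> PiE J A"
    by auto
  show "(restrict (merge I J ab) I, restrict (merge I J ab) J) = ab"
    if "ab \<in> PiE I A \<times> PiE J A" for ab
    using that assms by (auto simp: PiE_iff extensional_restrict)
  show "merge I J (restrict x I, restrict x J) = x" if "x \<in> PiE (I \<union> J) A" for x
    using that by (auto simp: PiE_iff extensional_def merge_def fun_eq_iff)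
qed

lemma sum_PiE_Un_merge:
  assumes "I \<inter> J = {}"
  shows "(\<Sum>x\<in>PiE (I \<union> J) A. h x) = (\<Sum>a\<in>PiE I A. \<Sum>b\<in>PiE J A. h (merge I J (a, b)))"
  by (simp add: sum.reindex_bij_betw[OF bij_betw_merge_PiE[OF assms], symmetric]
      sum.cartesian_product)

lemma sum_PiE_Un_factor:
  fixes h :: "('i \<Rightarrow> 'a) \<Rightarrow> 'c::comm_semiring_1"
  assumes "I \<inter> J = {}"
    and "\<And>a b. a \<in> PiE I A \<Longrightarrow> b \<in> PiE J A \<Longrightarrow> h (merge I J (a, b)) = u a * v b"
  shows "(\<Sum>x\<in>PiE (I \<union> J) A. h x) = (\<Sum>a\<in>PiE I A. u a) * (\<Sum>b\<in>PiE J A. v b)"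
  unfolding sum_PiE_Un_merge[OF assms(1)] sum_product by (simp add: assms(2))

lemma product_weighted_sum_independent:
  fixes I J :: "'i set" and q :: "'i \<Rightarrow> 'a \<Rightarrow> 'c::comm_semiring_1" and f g :: "('i \<Rightarrow> 'a) \<Rightarrow> 'c"
  defines "w x \<equiv> \<Prod>j\<in>I \<union> J. q j (x j)"
  assumes disj: "I \<inter> J = {}" and fin: "finite I" "finite J"
    and f: "depends_only_on (PiE (I \<union> J) A) I f"
    and g: "depends_only_on (PiE (I \<union> J) A) J g"
  shows "(\<Sum>x\<in>PiE (I \<union> J) A. w x * f x * g x) * (\<Sum>x\<in>PiE (I \<union> J) A. w x)
       = (\<Sum>x\<in>PiE (I \<union> J) A. w x * f x) * (\<Sum>x\<in>PiE (I \<union> J) A. w x * g x)"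
proof (cases "PiE (I \<union> J) A = {}")
  case False
  then obtain x0 where x0: "x0 \<in> PiE (I \<union> J) A" by blast
  define wI where "wI a = (\<Prod>j\<in>I. q j (a j))" for a
  define wJ where "wJ b = (\<Prod>j\<in>J. q j (b j))" for b
  define F where "F a = f (merge I J (a, x0))" for a
  define G where "G b = g (merge I J (x0, b))" for b
  have merge_in: "merge I J (a, b) \<in> PiE (I \<union> J) A" if "a \<in> PiE I A" "b \<in> PiE J A" for a b
    using bij_betw_apply[OF bij_betw_merge_PiE[OF disj]] that by auto
  have x0_I: "restrict x0 I \<in> PiE I A" and x0_J: "restrict x0 J \<in> PiE J A"
    using x0 by auto
  have w: "w (merge I J (a, b)) = wI a * wJ b" for a b
    unfolding w_def wI_def wJ_def prod.union_disjoint[OF fin disj]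
    using disj by (auto intro!: arg_cong2[where f="(*)"] prod.cong)
  have fF: "f (merge I J (a, b)) = F a" if "a \<in> PiE I A" "b \<in> PiE J A" for a b
    using depends_only_onD[OF f merge_in[OF that] merge_in[OF that(1) x0_J]] disj
    by (simp add: F_def)
  have gG: "g (merge I J (a, b)) = G b" if "a \<in> PiE I A" "b \<in> PiE J A" for a b
    using depends_only_onD[OF g merge_in[OF that] merge_in[OF x0_I that(2)]] disj
    by (simp add: G_def)
  have "(\<Sum>x\<in>PiE (I \<union> J) A. w x * f x * g x)
      = (\<Sum>a\<in>PiE I A. wI a * F a) * (\<Sum>b\<in>PiE J A. wJ b * G b)"
    by (rule sum_PiE_Un_factor[OF disj]) (simp add: w fF gG mult_ac)
  moreover have "(\<Sum>x\<in>PiE (I \<union> J) A. w x) = (\<Sum>a\<in>PiE I A. wI a) * (\<Sum>b\<in>PiE J A. wJ b)"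
    by (rule sum_PiE_Un_factor[OF disj]) (simp add: w)
  moreover have "(\<Sum>x\<in>PiE (I \<union> J) A. w x * f x) = (\<Sum>a\<in>PiE I A. wI a * F a) * (\<Sum>b\<in>PiE J A. wJ b)"
    by (rule sum_PiE_Un_factor[OF disj]) (simp add: w fF mult_ac)
  moreover have "(\<Sum>x\<in>PiE (I \<union> J) A. w x * g x) = (\<Sum>a\<in>PiE I A. wI a) * (\<Sum>b\<in>PiE J A. wJ b * G b)"
    by (rule sum_PiE_Un_factor[OF disj]) (simp add: w gG mult_ac)
  ultimately show ?thesis by (simp add: mult_ac)
qed simp

lemma depends_only_on_left_region:
  "depends_only_on C I (\<lambda>x. x \<in> R) \<Longrightarrow> v \<in> I
   \<Longrightarrow> depends_only_on C I (\<lambda>x. x \<in> left_region R v t)"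
  unfolding depends_only_on_def left_region_def mem_Collect_eq by metis

lemma depends_only_on_right_region:
  "depends_only_on C I (\<lambda>x. x \<in> R) \<Longrightarrow> v \<in> I
   \<Longrightarrow> depends_only_on C I (\<lambda>x. x \<in> right_region R v t)"
  unfolding depends_only_on_def right_region_def mem_Collect_eq by metis

lemma internal_nodes_depends_only_on:
  assumes "depends_only_on C I (\<lambda>x. x \<in> R)" and "split_features T \<subseteq> I"
    and "(R', v, t) \<in> internal_nodes R T"
  shows "depends_only_on C I (\<lambda>x. x \<in> R') \<and> v \<in> I"
  using assms
proof (induction T arbitrary: R)
  case (Node v0 t0 l r)
  then have "v0 \<in> I" by simp
  then have "depends_only_on C I (\<lambda>x. x \<in> left_region R v0 t0)"
    and "depends_only_on C I (\<lambda>x. x \<in> right_region R v0 t0)"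
    using Node.prems(1) depends_only_on_left_region depends_only_on_right_region by blast+
  moreover have "split_features l \<subseteq> I" and "split_features r \<subseteq> I"
    using Node.prems(2) by auto
  moreover have "(R', v, t) = (R, v0, t0)
      \<or> (R', v, t) \<in> internal_nodes (left_region R v0 t0) l
      \<or> (R', v, t) \<in> internal_nodes (right_region R v0 t0) r"
    using Node.prems(3) by simp
  ultimately show ?case
    using Node.prems(1) Node.IH \<open>v0 \<in> I\<close> by blast
qed simp

lemma stump_depends_only_on:
  assumes "depends_only_on C I (\<lambda>x. x \<in> R)" and "v \<in> I"
  shows "depends_only_on C I (stump B d p R v t)"
  unfolding depends_only_on_def
proof (intro ballI impI)
  fix x y assume "x \<in> C" "y \<in> C" "\<forall>i\<in>I. x i = y i"
  then have "x \<in> left_region R v t \<longleftrightarrow> y \<in> left_region R v t"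
    and "x \<in> right_region R v t \<longleftrightarrow> y \<in> right_region R v t"
    using depends_only_onD[OF depends_only_on_left_region[OF assms]]
      depends_only_onD[OF depends_only_on_right_region[OF assms]] by blast+
  then show "stump B d p R v t x = stump B d p R v t y"
    unfolding stump_def by simp
qed

lemma local_stump_depends_only_on:
  assumes "split_features T \<subseteq> I" and "\<psi> \<in> local_stumps B d p T"
  shows "depends_only_on (cube B d) I \<psi>"
proof -
  obtain R v t where "(R, v, t) \<in> internal_nodes (cube B d) T" and "\<psi> = stump B d p R v t"
    using assms(2) unfolding local_stumps_def by auto
  moreover have "depends_only_on (cube B d) I (\<lambda>x. x \<in> cube B d)"
    unfolding depends_only_on_def by simp
  ultimately show ?thesis
    using internal_nodes_depends_only_on[OF _ assms(1)] stump_depends_only_on by blast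
qed

lemma L2_inner_independent:
  assumes "I \<subseteq> {1..d}"
    and "depends_only_on (cube B d) I f" and "depends_only_on (cube B d) ({1..d} - I) g"
  shows "L2_inner B d p f g * L2_inner B d p (\<lambda>_. 1) (\<lambda>_. 1)
       = L2_inner B d p f (\<lambda>_. 1) * L2_inner B d p g (\<lambda>_. 1)"
proof -
  have "I \<union> ({1..d} - I) = {1..d}" using assms(1) by blast
  then show ?thesis
    using product_weighted_sum_independent[of I "{1..d} - I" "\<lambda>_. {1..B}" f g p]
      finite_subset[OF assms(1)] assms(2,3)
    by (simp add: L2_inner_def cube_def pmass_def)
qed

lemma L2_inner_one_one:
  assumes "is_marginals B d p"
  shows "L2_inner B d p (\<lambda>_. 1) (\<lambda>_. 1) = 1"
proof -
  have "L2_inner B d p (\<lambda>_. 1) (\<lambda>_. 1) = (\<Prod>j\<in>{1..d}. \<Sum>b\<in>{1..B}. p j b)"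
    unfolding L2_inner_def cube_def pmass_def by (simp add: prod_sum_PiE)
  also have "\<dots> = 1"
    using assms unfolding is_marginals_def by simp
  finally show ?thesis .
qed

lemma L2_inner_indicator_one:
  "L2_inner B d p (\<lambda>x. if x \<in> S then 1 else 0) (\<lambda>_. 1) = nu B d p S"
proof -
  have "finite (cube B d)" by (simp add: cube_def finite_PiE)
  then show ?thesis
    unfolding L2_inner_def nu_def Int_commute[of S] sum.inter_restrict[OF \<open>finite (cube B d)\<close>]
    by (intro sum.cong) auto
qed

lemma L2_inner_stump_one: "L2_inner B d p (stump B d p R v t) (\<lambda>_. 1) = 0"
proof -
  define a where "a = nu B d p (right_region R v t)"
  define b where "b = nu B d p (left_region R v t)"
  define in_left where "in_left x = (if x \<in> left_region R v t then 1 else 0 :: real)" for x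
  define in_right where "in_right x = (if x \<in> right_region R v t then 1 else 0 :: real)" for x
  have "L2_inner B d p (stump B d p R v t) (\<lambda>_. 1)
      = (\<Sum>x\<in>cube B d. (a * (pmass d p x * in_left x) - b * (pmass d p x * in_right x))
          / sqrt (b * a))"
    unfolding L2_inner_def stump_def a_def b_def in_left_def in_right_def
    by (simp add: algebra_simps)
  also have "\<dots> = (a * L2_inner B d p in_left (\<lambda>_. 1) - b * L2_inner B d p in_right (\<lambda>_. 1))
      / sqrt (b * a)"
    unfolding L2_inner_def sum_divide_distrib[symmetric] sum_subtractf sum_distrib_left by simp
  also have "\<dots> = 0"
    unfolding in_left_def in_right_def L2_inner_indicator_one a_def b_def by simp
  finally show ?thesis .
qed

lemma L2_inner_local_stump_one:
  "\<psi> \<in> local_stumps B d p T \<Longrightarrow> L2_inner B d p \<psi> (\<lambda>_. 1) = 0"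
  unfolding local_stumps_def using L2_inner_stump_one by auto

theorem lemmaF1:
  fixes B d :: nat and p :: "nat \<Rightarrow> nat \<Rightarrow> real"
    and T1 T2 :: tree and I1 I2 :: "nat set"
  assumes "is_marginals B d p"
    and "is_tree_structure B d T1" and "is_tree_structure B d T2"
    and "I1 \<subseteq> {1..d}" and "I2 \<subseteq> {1..d}" and "I1 \<inter> I2 = {}"
    and "split_features T1 \<subseteq> I1" and "split_features T2 \<subseteq> I2"
    and "\<psi>1 \<in> local_stumps B d p T1" and "\<psi>2 \<in> local_stumps B d p T2"
  shows "L2_inner B d p \<psi>1 \<psi>2 = 0"
proof -
  have "depends_only_on (cube B d) I1 \<psi>1"
    using local_stump_depends_only_on assms(7,9) by blast
  moreover have "depends_only_on (cube B d) ({1..d} - I1) \<psi>2"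
    using local_stump_depends_only_on[OF assms(8,10)] depends_only_on_mono assms(5,6) by blast
  ultimately have "L2_inner B d p \<psi>1 \<psi>2 * L2_inner B d p (\<lambda>_. 1) (\<lambda>_. 1)
      = L2_inner B d p \<psi>1 (\<lambda>_. 1) * L2_inner B d p \<psi>2 (\<lambda>_. 1)"
    using L2_inner_independent assms(4) by blast
  then show ?thesis
    using L2_inner_one_one[OF assms(1)] L2_inner_local_stump_one[OF assms(9)] by simp
qed

end
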